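(* For every chordal graph $G$, $\operatorname{box}(G)\le \omega(G)+1\le \Delta(G)+2$.
   Context: A graph is chordal if every cycle of length at least 4 has a chord (an edge joining two non-consecutive vertices of the cycle). $\omega(G)$ is the clique number (maximum size of a clique) and $\Delta(G)$ is the maximum degree. The boxicity $\operatorname{box}(G)$ is the minimum $b$ such that $G$ is the intersection graph of axis-parallel boxes in $\mathbb{R}^b$ (products of $b$ closed intervals), one box per vertex. *)

theory Defs
  imports Complex_Main
begin

definition simple_graph :: "'a set \<Rightarrow> ('a \<Rightarrow> 'a \<Rightarrow> bool) \<Rightarrow> bool" where
  "simple_graph V E \<longleftrightarrow> finite V \<and> (\<forall>x y. E x y \<longrightarrow> x \<in> V \<and> y \<in> V)
     \<and> (\<forall>x y. E x y \<longrightarrow> E y x) \<and> (\<forall>x. \<not> E x x)"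

definition is_cycle :: "'a set \<Rightarrow> ('a \<Rightarrow> 'a \<Rightarrow> bool) \<Rightarrow> 'a list \<Rightarrow> bool" where
  "is_cycle V E vs \<longleftrightarrow> length vs \<ge> 3 \<and> distinct vs \<and> set vs \<subseteq> V
     \<and> (\<forall>i < length vs. E (vs ! i) (vs ! ((i + 1) mod length vs)))"

definition has_chord :: "('a \<Rightarrow> 'a \<Rightarrow> bool) \<Rightarrow> 'a list \<Rightarrow> bool" where
  "has_chord E vs \<longleftrightarrow> (\<exists>i < length vs. \<exists>j < length vs. i \<noteq> j
     \<and> j \<noteq> (i + 1) mod length vs \<and> i \<noteq> (j + 1) mod length vs
     \<and> E (vs ! i) (vs ! j))"

definition chordal :: "'a set \<Rightarrow> ('a \<Rightarrow> 'a \<Rightarrow> bool) \<Rightarrow> bool" where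
  "chordal V E \<longleftrightarrow> (\<forall>vs. is_cycle V E vs \<and> length vs \<ge> 4 \<longrightarrow> has_chord E vs)"

definition is_clique :: "'a set \<Rightarrow> ('a \<Rightarrow> 'a \<Rightarrow> bool) \<Rightarrow> 'a set \<Rightarrow> bool" where
  "is_clique V E C \<longleftrightarrow> C \<subseteq> V \<and> (\<forall>x\<in>C. \<forall>y\<in>C. x \<noteq> y \<longrightarrow> E x y)"

definition clique_number :: "'a set \<Rightarrow> ('a \<Rightarrow> 'a \<Rightarrow> bool) \<Rightarrow> nat" where
  "clique_number V E = Max {card C | C. is_clique V E C}"

definition degree :: "'a set \<Rightarrow> ('a \<Rightarrow> 'a \<Rightarrow> bool) \<Rightarrow> 'a \<Rightarrow> nat" where
  "degree V E v = card {u \<in> V. E v u}"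

definition max_degree :: "'a set \<Rightarrow> ('a \<Rightarrow> 'a \<Rightarrow> bool) \<Rightarrow> nat" where
  "max_degree V E = Max (insert 0 (degree V E ` V))"

text \<open>A box representation in R^b: vertex x gets the box
  [lo x 0, hi x 0] \<times> ... \<times> [lo x (b-1), hi x (b-1)] (nonempty, closed);
  two distinct vertices are adjacent iff their boxes intersect.\<close>
definition box_rep :: "'a set \<Rightarrow> ('a \<Rightarrow> 'a \<Rightarrow> bool) \<Rightarrow> nat \<Rightarrow>
    ('a \<Rightarrow> nat \<Rightarrow> real) \<Rightarrow> ('a \<Rightarrow> nat \<Rightarrow> real) \<Rightarrow> bool" where
  "box_rep V E b lo hi \<longleftrightarrow>
     (\<forall>x\<in>V. \<forall>i<b. lo x i \<le> hi x i) \<and>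
     (\<forall>x\<in>V. \<forall>y\<in>V. x \<noteq> y \<longrightarrow>
        (E x y \<longleftrightarrow> (\<forall>i<b. {lo x i..hi x i} \<inter> {lo y i..hi y i} \<noteq> {})))"

definition boxicity :: "'a set \<Rightarrow> ('a \<Rightarrow> 'a \<Rightarrow> bool) \<Rightarrow> nat" where
  "boxicity V E = (LEAST b. \<exists>lo hi. box_rep V E b lo hi)"

end

theory Submission
  imports Defs
begin

text \<open>
  By Dirac's lemma a chordal graph can be built up by repeatedly adding a simplicial vertex.
  Adding each new vertex as a leaf below its deepest neighbour yields a rooted forest, encoded by
  nested real intervals [s v, t v], in which every edge joins a vertex to one of its ancestors and
  the ancestors adjacent to a vertex are pairwise adjacent; along the way the vertices are greedily
  coloured with \<omega> colours. In coordinate i < \<omega> the box of v is the point s v if v has colour i,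
  and otherwise reaches from the adjacent ancestor of colour i (or from s v, if there is none) up
  to t v; coordinate \<omega> is [s v, t v]. An ancestor x of a non-neighbour y is then separated from
  it in coordinate c x, since y's adjacent ancestor of that colour lies strictly below x, and
  incomparable vertices are separated in coordinate \<omega>. Finally \<omega> \<le> \<Delta> + 1 because a maximum
  clique lies in the closed neighbourhood of any of its vertices.
\<close>

section \<open>Shortest walks and chordless cycles\<close>

lemma successively_shortcut:
  assumes "successively R W" "i < j" "j < length W" "R (W ! i) (W ! j)"
  shows "successively R (take (Suc i) W @ drop j W)"
proof -
  have "successively R (take (Suc i) W)" "successively R (drop j W)"
    using assms(1) successively_append_iff append_take_drop_id by metis+
  moreover have "last (take (Suc i) W) = W ! i" "hd (drop j W) = W ! j"
    using assms(2,3) by (simp_all add: take_Suc_conv_app_nth hd_drop_conv_nth)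
  ultimately show ?thesis
    using assms(4) by (simp add: successively_append_iff)
qed

lemma shortest_walk_induced:
  assumes walk: "successively R W"
    and shortest: "\<And>W'. successively R W' \<Longrightarrow> W' \<noteq> [] \<Longrightarrow> hd W' = hd W \<Longrightarrow>
      last W' = last W \<Longrightarrow> set W' \<subseteq> set W \<Longrightarrow> length W \<le> length W'"
  shows "distinct W" and "i + 2 \<le> j \<Longrightarrow> j < length W \<Longrightarrow> \<not> R (W ! i) (W ! j)"
proof -
  have no_shortcut: "j \<le> Suc i" if "i < j" "j < length W" "R (W ! i) (W ! j)" for i j
  proof -
    let ?W' = "take (Suc i) W @ drop j W"
    have "length W \<le> length ?W'"
      using that by (intro shortest successively_shortcut[OF walk])
        (auto simp: hd_append last_append dest: in_set_takeD in_set_dropD)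
    then show ?thesis using that by simp
  qed
  show "\<not> R (W ! i) (W ! j)" if "i + 2 \<le> j" "j < length W"
  proof
    assume "R (W ! i) (W ! j)"
    with that have "j \<le> Suc i" by (intro no_shortcut) auto
    with that(1) show False by simp
  qed
  show "distinct W"
  proof (rule ccontr)
    assume "\<not> distinct W"
    then obtain i j where ij: "i < j" "j < length W" "W ! i = W ! j"
      by (metis distinct_conv_nth nat_neq_iff)
    show False
    proof (cases "Suc j < length W")
      case True
      then show False
        using no_shortcut[of i "Suc j"] successively_nth[OF walk, of j] ij by simp
    next
      case False
      then have "j = length W - 1"
        using ij(2) by linarith
      then have "W ! j = last W"
        using ij(2) by (cases "W = []") (auto simp: last_conv_nth)
      have "successively R (take (Suc i) W)"
        using walk successively_append_iff append_take_drop_id by metis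
      moreover have "last (take (Suc i) W) = last W"
        using ij \<open>W ! j = last W\<close> by (simp add: take_Suc_conv_app_nth)
      ultimately have "length W \<le> length (take (Suc i) W)"
        using ij by (intro shortest) (auto simp: hd_conv_nth set_take_subset)
      then show False
        using ij by simp
    qed
  qed
qed

lemma chordal_cycle_has_chord:
  assumes "chordal X E" "symp E" "distinct W" "set W \<subseteq> X" "4 \<le> length W"
    and "successively E W" "E (last W) (hd W)"
  obtains i j where "i + 2 \<le> j" "j < length W" "0 < i \<or> j < length W - 1" "E (W ! i) (W ! j)"
proof -
  let ?n = "length W"
  have "E (W ! i) (W ! ((i + 1) mod ?n))" if "i < ?n" for i
  proof (cases "Suc i < ?n")
    case True
    then show ?thesis using successively_nth[OF assms(6)] by simp
  next
    case False
    then have "i = ?n - 1" using that by linarith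
    moreover have "W \<noteq> []" using assms(5) by auto
    ultimately show ?thesis using assms(7) by (simp add: last_conv_nth hd_conv_nth)
  qed
  then have "is_cycle X E W"
    using assms(3-5) by (simp add: is_cycle_def)
  then obtain i j where ij: "i < ?n" "j < ?n" "i \<noteq> j" "j \<noteq> (i + 1) mod ?n"
      "i \<noteq> (j + 1) mod ?n" "E (W ! i) (W ! j)"
    using assms(1,5) unfolding chordal_def has_chord_def by blast
  show thesis
  proof (cases "i < j")
    case True
    then show thesis using ij by (intro that[of i j]) (auto simp: mod_if split: if_splits)
  next
    case False
    then show thesis using ij sympD[OF assms(2)] by (intro that[of j i]) (auto simp: mod_if split: if_splits)
  qed
qed

lemma chordal_apex_of_chordless_path:
  assumes chordal: "chordal X E" and sym: "symp E"
    and W: "distinct W" "set W \<subseteq> X" "3 \<le> length W" "successively E W"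
    and chordless: "\<And>i j. i + 2 \<le> j \<Longrightarrow> j < length W \<Longrightarrow> \<not> E (W ! i) (W ! j)"
    and b: "b \<in> X" "b \<notin> set W" "E b (hd W)" "E b (last W)"
  obtains i where "0 < i" "i < length W - 1" "E b (W ! i)"
proof -
  define C where "C = W @ [b]"
  have cycle: "distinct C" "set C \<subseteq> X" "4 \<le> length C" "successively E C" "E (last C) (hd C)"
    using W b sympD[OF sym] by (auto simp: C_def successively_append_iff hd_append)
  obtain i j where ij: "i + 2 \<le> j" "j < length C" "0 < i \<or> j < length C - 1" "E (C ! i) (C ! j)"
    using chordal_cycle_has_chord[OF chordal sym cycle] .
  have "j = length W"
    using chordless[of i j] ij by (cases "j < length W") (auto simp: C_def nth_append)
  then have "0 < i" "i < length W - 1" "E (W ! i) b"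
    using ij by (auto simp: C_def nth_append)
  with that show thesis
    using sympD[OF sym] by blast
qed

text \<open>A shortest x-y walk through P is a chordless path, which b closes to a cycle.\<close>

lemma chordal_path_meets_neighbourhood:
  assumes chordal: "chordal X E" and sym: "symp E" and irrefl: "irreflp E"
    and "x \<in> X" "y \<in> X" "b \<in> X" "x \<noteq> y" "\<not> E x y" "E b x" "E b y"
    and path: "set P \<subseteq> X - {x, y, b}" "successively E (x # P @ [y])"
  shows "\<exists>u\<in>set P. E b u"
proof -
  define walks where "walks = {W. successively E W \<and> W \<noteq> [] \<and> hd W = x \<and> last W = y
    \<and> set W \<subseteq> insert x (insert y (set P))}"
  have "x # P @ [y] \<in> walks"
    using path by (auto simp: walks_def)
  then obtain W where "W \<in> walks" and shortest: "\<And>W'. W' \<in> walks \<Longrightarrow> length W \<le> length W'"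
    using ex_has_least_nat[of "\<lambda>W. W \<in> walks" _ length] by metis
  then have W: "successively E W" "W \<noteq> []" "hd W = x" "last W = y"
    "set W \<subseteq> insert x (insert y (set P))"
    by (auto simp: walks_def)
  have "distinct W" and chordless: "\<And>i j. i + 2 \<le> j \<Longrightarrow> j < length W \<Longrightarrow> \<not> E (W ! i) (W ! j)"
    using shortest_walk_induced[OF W(1)] shortest W by (auto simp: walks_def)
  have "length W \<noteq> 1"
    using W \<open>x \<noteq> y\<close> by (auto simp: hd_conv_nth last_conv_nth)
  moreover have "length W \<noteq> 2"
  proof
    assume "length W = 2"
    then show False
      using successively_nth[OF W(1), of 0] W(2-4) \<open>\<not> E x y\<close> by (simp add: hd_conv_nth last_conv_nth)
  qed
  ultimately have "3 \<le> length W"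
    using W(2) length_greater_0_conv[of W] by linarith
  moreover have "set W \<subseteq> X" "b \<notin> set W"
    using W(5) path(1) \<open>x \<in> X\<close> \<open>y \<in> X\<close> \<open>E b x\<close> \<open>E b y\<close> irreflpD[OF irrefl] by auto
  ultimately obtain i where i: "0 < i" "i < length W - 1" "E b (W ! i)"
    using chordal_apex_of_chordless_path[OF chordal sym \<open>distinct W\<close>] W chordless \<open>b \<in> X\<close>
      \<open>E b x\<close> \<open>E b y\<close> by metis
  have "W ! i \<noteq> x" "W ! i \<noteq> y"
    using \<open>distinct W\<close> W(2-4) i(1,2) by (auto simp: hd_conv_nth last_conv_nth nth_eq_iff_index_eq)
  moreover have "W ! i \<in> set W"
    using i(2) by simp
  ultimately show ?thesis
    using W(5) i(3) by auto
qed

section \<open>Simplicial vertices\<close>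

definition simplicial :: "'a set \<Rightarrow> ('a \<Rightarrow> 'a \<Rightarrow> bool) \<Rightarrow> 'a \<Rightarrow> bool" where
  "simplicial X E v \<longleftrightarrow> is_clique X E {u \<in> X. E v u}"

lemma chordal_subset: "chordal X E \<Longrightarrow> Y \<subseteq> X \<Longrightarrow> chordal Y E"
  unfolding chordal_def is_cycle_def by blast

lemma rtranclp_restrict_walk:
  assumes "(\<lambda>p q. E p q \<and> p \<in> Y \<and> q \<in> Y)\<^sup>*\<^sup>* u v" "u \<in> Y"
  obtains P where "P \<noteq> []" "hd P = u" "last P = v" "set P \<subseteq> Y" "successively E P"
proof -
  from assms have "\<exists>P. P \<noteq> [] \<and> hd P = u \<and> last P = v \<and> set P \<subseteq> Y \<and> successively E P"
  proof (induction rule: rtranclp_induct)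
    case base
    then show ?case by (intro exI[of _ "[u]"]) auto
  next
    case (step w z)
    then obtain P where "P \<noteq> []" "hd P = u" "last P = w" "set P \<subseteq> Y" "successively E P"
      by blast
    with step.hyps(2) show ?case
      by (intro exI[of _ "P @ [z]"]) (auto simp: successively_append_iff)
  qed
  with that show thesis by blast
qed

lemma chordal_clique_separator:
  assumes chordal: "chordal X E" and sym: "symp E" and irrefl: "irreflp E"
    and "a \<in> X" "b \<in> X" "a \<noteq> b" "\<not> E a b"
  obtains A S where "a \<in> A" "A \<subseteq> X - {b}" "S \<subseteq> X - {b}" "A \<inter> S = {}" "is_clique X E S"
    "\<And>u w. u \<in> A \<Longrightarrow> w \<in> X \<Longrightarrow> E u w \<Longrightarrow> w \<in> A \<union> S"
proof -
  define Y where "Y = {v \<in> X. v \<noteq> b \<and> \<not> E b v}"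
  define R where "R p q \<longleftrightarrow> E p q \<and> p \<in> Y \<and> q \<in> Y" for p q
  define A where "A = {z. R\<^sup>*\<^sup>* a z}"
  define S where "S = {w \<in> X. E b w \<and> (\<exists>u\<in>A. E w u)}"
  have "a \<in> Y"
    using assms(4-7) sympD[OF sym] by (auto simp: Y_def)
  have "A \<subseteq> Y"
    using \<open>a \<in> Y\<close> by (auto simp: A_def R_def elim: rtranclp.cases)
  have closed: "w \<in> A \<union> S" if "u \<in> A" "w \<in> X" "E u w" for u w
  proof (cases "w \<in> Y")
    case True
    with that \<open>A \<subseteq> Y\<close> have "R u w" by (auto simp: R_def)
    with that(1) show ?thesis by (auto simp: A_def)
  next
    case False
    with that \<open>A \<subseteq> Y\<close> sympD[OF sym] show ?thesis by (auto simp: Y_def S_def)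
  qed
  have "is_clique X E S"
    unfolding is_clique_def
  proof (intro conjI ballI impI)
    fix x y assume "x \<in> S" "y \<in> S" "x \<noteq> y"
    then obtain u u' where u: "u \<in> A" "E x u" and u': "u' \<in> A" "E u' y"
      and "x \<in> X" "y \<in> X" "E b x" "E b y"
      using sympD[OF sym] by (auto simp: S_def)
    have "symp R"
      using sym by (auto simp: R_def intro!: sympI dest: sympD)
    then have "R\<^sup>*\<^sup>* u a"
      using u(1) sympD[OF symp_rtranclp] by (auto simp: A_def)
    then have "R\<^sup>*\<^sup>* u u'"
      using u'(1) by (simp add: A_def)
    then obtain P where P: "P \<noteq> []" "hd P = u" "last P = u'" "set P \<subseteq> Y" "successively E P"
      using rtranclp_restrict_walk[of E Y u u'] u(1) \<open>A \<subseteq> Y\<close> unfolding R_def by blast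
    show "E x y"
    proof (rule ccontr)
      assume "\<not> E x y"
      moreover have "successively E (x # P @ [y])"
        using P u u' by (auto simp: successively_append_iff successively_Cons)
      moreover have "set P \<subseteq> X - {x, y, b}"
        using P(4) \<open>E b x\<close> \<open>E b y\<close> by (auto simp: Y_def)
      ultimately obtain v where "v \<in> set P" "E b v"
        using chordal_path_meets_neighbourhood[OF chordal sym irrefl \<open>x \<in> X\<close> \<open>y \<in> X\<close> \<open>b \<in> X\<close>
            \<open>x \<noteq> y\<close>] \<open>E b x\<close> \<open>E b y\<close> by blast
      with P(4) show False by (auto simp: Y_def)
    qed
  qed (auto simp: S_def)
  moreover have "a \<in> A" "A \<subseteq> X - {b}" "S \<subseteq> X - {b}" "A \<inter> S = {}"
    using \<open>A \<subseteq> Y\<close> irreflpD[OF irrefl] by (auto simp: A_def S_def Y_def)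
  ultimately show thesis
    using that closed by blast
qed

lemma simplicial_if_neighbourhood_subset:
  assumes "simplicial Y E v" "{u \<in> X. E v u} \<subseteq> Y"
  shows "simplicial X E v"
  using assms by (auto simp: simplicial_def is_clique_def)

lemma is_clique_subset_carrier: "is_clique X E S \<Longrightarrow> S \<subseteq> Y \<Longrightarrow> is_clique Y E S"
  by (simp add: is_clique_def)

text \<open>Dirac's lemma, in a form that serves as its own induction hypothesis: a non-complete
  chordal graph has two non-adjacent simplicial vertices, and a clique cannot contain both.\<close>

lemma chordal_simplicial_outside_clique:
  assumes "finite X" "chordal X E" and sym: "symp E" and irrefl: "irreflp E"
    and "is_clique X E S" "v \<in> X - S"
  shows "\<exists>z\<in>X - S. simplicial X E z"
  using assms(1,2,5,6)
proof (induction X arbitrary: S v rule: finite_psubset_induct)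
  case (psubset X)
  show ?case
  proof (cases "is_clique X E X")
    case True
    then have "simplicial X E v"
      by (auto simp: simplicial_def is_clique_def)
    then show ?thesis
      using psubset.prems(3) by blast
  next
    case False
    then obtain a b where "a \<in> X" "b \<in> X" "a \<noteq> b" "\<not> E a b"
      by (auto simp: is_clique_def)
    then obtain A S' where A: "a \<in> A" "A \<subseteq> X - {b}" "S' \<subseteq> X - {b}" "A \<inter> S' = {}"
        and S': "is_clique X E S'"
        and closed: "\<And>u w. u \<in> A \<Longrightarrow> w \<in> X \<Longrightarrow> E u w \<Longrightarrow> w \<in> A \<union> S'"
      using chordal_clique_separator[OF psubset.prems(1) sym irrefl] by metis
    have "A \<union> S' \<subset> X" "X - A \<subset> X"
      using A \<open>b \<in> X\<close> by auto
    obtain z where z: "z \<in> A" "simplicial (A \<union> S') E z"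
      using psubset.IH[OF \<open>A \<union> S' \<subset> X\<close> chordal_subset[OF psubset.prems(1)]
          is_clique_subset_carrier[OF S'], of a] A
      by blast
    obtain w where w: "w \<in> X - A - S'" "simplicial (X - A) E w"
      using psubset.IH[OF \<open>X - A \<subset> X\<close> chordal_subset[OF psubset.prems(1)]
          is_clique_subset_carrier[OF S'], of b] A \<open>b \<in> X\<close>
      by blast
    have "simplicial X E z"
      using z closed by (intro simplicial_if_neighbourhood_subset[OF z(2)]) auto
    moreover have "simplicial X E w"
      using w closed sympD[OF sym] by (intro simplicial_if_neighbourhood_subset[OF w(2)]) blast
    moreover have "z \<notin> S \<or> w \<notin> S"
    proof -
      have "z \<noteq> w" "\<not> E z w"
        using z w closed A by auto
      with psubset.prems(2) show ?thesis by (auto simp: is_clique_def)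
    qed
    ultimately show ?thesis
      using z(1) w(1) A(2) by blast
  qed
qed

lemma chordal_simplicial_induct [consumes 4, case_names empty insert]:
  assumes "finite X" "chordal X E" "symp E" "irreflp E"
    and empty: "P {}"
    and insert: "\<And>Y v. insert v Y \<subseteq> X \<Longrightarrow> v \<notin> Y \<Longrightarrow> simplicial (insert v Y) E v \<Longrightarrow> P Y \<Longrightarrow>
      P (insert v Y)"
  shows "P X"
proof -
  have "P Y" if "Y \<subseteq> X" for Y
    using finite_subset[OF that assms(1)] that
  proof (induction Y rule: finite_psubset_induct)
    case (psubset Y)
    show ?case
    proof (cases "Y = {}")
      case False
      then obtain v where v: "v \<in> Y" "simplicial Y E v"
        using chordal_simplicial_outside_clique[OF psubset.hyps(1)
            chordal_subset[OF assms(2) psubset.prems] assms(3,4), of "{}"]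
        by (auto simp: is_clique_def)
      then have "P (insert v (Y - {v}))"
        using psubset by (intro insert) (auto simp: insert_absorb)
      with v(1) show ?thesis
        by (simp add: insert_absorb)
    qed (simp add: empty)
  qed
  then show ?thesis by simp
qed

lemma chordal_colouring:
  assumes "finite X" "chordal X E" "symp E" "irreflp E"
    and clique_bound: "\<And>C. is_clique X E C \<Longrightarrow> card C \<le> k"
  obtains c :: "'a \<Rightarrow> nat"
  where "\<And>u. u \<in> X \<Longrightarrow> c u < k" "\<And>u w. u \<in> X \<Longrightarrow> w \<in> X \<Longrightarrow> E u w \<Longrightarrow> c u \<noteq> c w"
proof -
  have "\<exists>c :: 'a \<Rightarrow> nat. (\<forall>u\<in>X. c u < k) \<and> (\<forall>u\<in>X. \<forall>w\<in>X. E u w \<longrightarrow> c u \<noteq> c w)"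
    using assms(1-4)
  proof (induction rule: chordal_simplicial_induct)
    case (insert Y v)
    then obtain c :: "'a \<Rightarrow> nat" where c: "\<forall>u\<in>Y. c u < k" "\<forall>u\<in>Y. \<forall>w\<in>Y. E u w \<longrightarrow> c u \<noteq> c w"
      by blast
    define K where "K = {u \<in> Y. E v u}"
    have "finite K"
      using insert.hyps(1) assms(1) by (auto simp: K_def intro: finite_subset)
    have "is_clique X E (insert v K)"
      unfolding is_clique_def
    proof (intro conjI ballI impI)
      show "insert v K \<subseteq> X"
        using insert.hyps(1) by (auto simp: K_def)
      fix x y assume "x \<in> insert v K" "y \<in> insert v K" "x \<noteq> y"
      then show "E x y"
        using insert.hyps(3) sympD[OF assms(3), of v]
        unfolding simplicial_def is_clique_def K_def by blast
    qed
    then have "card (insert v K) \<le> k"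
      by (rule clique_bound)
    then have "card K < k"
      using \<open>finite K\<close> insert.hyps(2) by (simp add: K_def)
    have "\<not> {..<k} \<subseteq> c ` K"
    proof
      assume "{..<k} \<subseteq> c ` K"
      then have "card {..<k} \<le> card (c ` K)"
        using \<open>finite K\<close> by (intro card_mono) auto
      also have "\<dots> \<le> card K"
        using \<open>finite K\<close> by (rule card_image_le)
      finally show False
        using \<open>card K < k\<close> by simp
    qed
    then obtain col where "col < k" "col \<notin> c ` K"
      by blast
    with c insert.hyps(2) sympD[OF assms(3), of _ v] irreflpD[OF assms(4), of v] show ?case
      by (intro exI[of _ "c(v := col)"]) (auto simp: K_def)
  qed simp
  with that show thesis by blast
qed

section \<open>Laminar interval models\<close>

definition encloses :: "('a \<Rightarrow> real) \<Rightarrow> ('a \<Rightarrow> real) \<Rightarrow> 'a \<Rightarrow> 'a \<Rightarrow> bool" where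
  "encloses s t u w \<longleftrightarrow> s u < s w \<and> t w < t u"

text \<open>Nesting of the intervals [s u, t u] is the ancestor relation of a rooted forest.\<close>

locale laminar_model =
  fixes X :: "'a set" and E :: "'a \<Rightarrow> 'a \<Rightarrow> bool" and s t :: "'a \<Rightarrow> real"
  assumes interval: "u \<in> X \<Longrightarrow> s u < t u"
    and disjoint_or_nested: "u \<in> X \<Longrightarrow> w \<in> X \<Longrightarrow> u \<noteq> w \<Longrightarrow>
      t u < s w \<or> t w < s u \<or> encloses s t u w \<or> encloses s t w u"
    and edge_nested: "u \<in> X \<Longrightarrow> w \<in> X \<Longrightarrow> E u w \<Longrightarrow> encloses s t u w \<or> encloses s t w u"
    and edge_intermediate: "a \<in> X \<Longrightarrow> u \<in> X \<Longrightarrow> w \<in> X \<Longrightarrow> E a w \<Longrightarrow>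
      encloses s t a u \<Longrightarrow> encloses s t u w \<Longrightarrow> E a u"
begin

lemma insert_vertex:
  assumes sym: "symp E" and irrefl: "irreflp E" and "v \<notin> X" "sv < tv"
    and placed: "\<And>u. u \<in> X \<Longrightarrow> tv < s u \<or> t u < sv \<or> (s u < sv \<and> tv < t u)"
    and neighbours: "\<And>u. u \<in> X \<Longrightarrow> E v u \<Longrightarrow> s u < sv \<and> tv < t u"
    and intermediate: "\<And>a u. a \<in> X \<Longrightarrow> u \<in> X \<Longrightarrow> E v a \<Longrightarrow> encloses s t a u \<Longrightarrow>
      s u < sv \<Longrightarrow> tv < t u \<Longrightarrow> E a u"
  shows "laminar_model (insert v X) E (s(v := sv)) (t(v := tv))"
proof -
  let ?s = "s(v := sv)" and ?t = "t(v := tv)"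
  have old: "encloses ?s ?t u w \<longleftrightarrow> encloses s t u w" if "u \<in> X" "w \<in> X" for u w
    using that \<open>v \<notin> X\<close> by (auto simp: encloses_def)
  have into_v: "encloses ?s ?t u v \<longleftrightarrow> s u < sv \<and> tv < t u" if "u \<in> X" for u
    using that \<open>v \<notin> X\<close> by (auto simp: encloses_def)
  have from_v: "\<not> encloses ?s ?t v u" if "u \<in> X" for u
    using that \<open>v \<notin> X\<close> placed[OF that] interval[OF that] by (auto simp: encloses_def)
  have v_self: "\<not> encloses ?s ?t v v"
    by (simp add: encloses_def)
  show ?thesis
  proof unfold_locales
    fix u assume "u \<in> insert v X"
    then show "?s u < ?t u"
      using interval \<open>sv < tv\<close> \<open>v \<notin> X\<close> by auto
  next
    fix u w assume uw: "u \<in> insert v X" "w \<in> insert v X" "u \<noteq> w"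
    show "?t u < ?s w \<or> ?t w < ?s u \<or> encloses ?s ?t u w \<or> encloses ?s ?t w u"
    proof (cases "u = v \<or> w = v")
      case True
      then show ?thesis
        using uw placed[of u] placed[of w] into_v \<open>v \<notin> X\<close> by auto
    next
      case False
      then show ?thesis
        using uw disjoint_or_nested[of u w] old by auto
    qed
  next
    fix u w assume "u \<in> insert v X" "w \<in> insert v X" "E u w"
    then show "encloses ?s ?t u w \<or> encloses ?s ?t w u"
      using edge_nested old into_v neighbours sympD[OF sym, of u v] irreflpD[OF irrefl, of v]
      by auto
  next
    fix a u w assume auw: "a \<in> insert v X" "u \<in> insert v X" "w \<in> insert v X" "E a w"
      and au: "encloses ?s ?t a u" and uw: "encloses ?s ?t u w"
    have "a \<noteq> v"
      using au from_v[of u] v_self auw(2) by (cases "u = v") auto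
    moreover have "u \<noteq> v"
      using uw from_v[of w] v_self auw(3) by (cases "w = v") auto
    ultimately have "a \<in> X" "u \<in> X"
      using auw(1,2) by auto
    show "E a u"
    proof (cases "w = v")
      case True
      then show ?thesis
        using intermediate \<open>a \<in> X\<close> \<open>u \<in> X\<close> au uw auw(4) old into_v sympD[OF sym, of a v]
        by simp
    next
      case False
      then have "w \<in> X"
        using auw(3) by simp
      then show ?thesis
        using edge_intermediate[OF \<open>a \<in> X\<close> \<open>u \<in> X\<close> \<open>w \<in> X\<close> auw(4)] au uw
          old \<open>a \<in> X\<close> \<open>u \<in> X\<close>
        by simp
    qed
  qed
qed

lemma insert_isolated:
  assumes "symp E" "irreflp E" "finite X" "v \<notin> X" "\<And>u. u \<in> X \<Longrightarrow> \<not> E v u"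
  shows "\<exists>sv tv. laminar_model (insert v X) E (s(v := sv)) (t(v := tv))"
proof -
  define M where "M = Max (insert 0 (t ` X))"
  have "t u \<le> M" if "u \<in> X" for u
    using that \<open>finite X\<close> by (simp add: M_def)
  then have "laminar_model (insert v X) E (s(v := M + 1)) (t(v := M + 2))"
  proof (intro insert_vertex)
    fix u assume "u \<in> X"
    with \<open>\<And>u. u \<in> X \<Longrightarrow> t u \<le> M\<close> show "M + 2 < s u \<or> t u < M + 1 \<or> s u < M + 1 \<and> M + 2 < t u"
      by fastforce
  qed (use assms in auto)
  then show ?thesis by blast
qed

text \<open>A slot for a new leaf child of d.\<close>

lemma leaf_interval_below:
  assumes "finite X" "d \<in> X"
  obtains sv tv where "s d < sv" "sv < tv" "tv < t d"
    "\<And>u. u \<in> X \<Longrightarrow> tv < s u \<or> t u < sv \<or> ((u = d \<or> encloses s t u d) \<and> s u < sv \<and> tv < t u)"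
proof -
  define m where "m = Min (insert (t d) (s ` {w \<in> X. s d < s w}))"
  have below_m: "m \<le> t d" "\<And>w. w \<in> X \<Longrightarrow> s d < s w \<Longrightarrow> m \<le> s w"
    unfolding m_def using \<open>finite X\<close> by (auto intro: Min_le)
  have "s d < m"
    unfolding m_def using \<open>finite X\<close> interval[OF \<open>d \<in> X\<close>] by (subst Min_gr_iff) auto
  define sv where "sv = (2 * s d + m) / 3"
  define tv where "tv = (s d + 2 * m) / 3"
  have sv_tv: "s d < sv" "sv < tv" "tv < m"
    using \<open>s d < m\<close> by (simp_all add: sv_def tv_def)
  have "tv < s u \<or> t u < sv \<or> ((u = d \<or> encloses s t u d) \<and> s u < sv \<and> tv < t u)"
    if "u \<in> X" for u
  proof -
    consider "s d < s u" | "u = d" | "u \<noteq> d" "s u \<le> s d"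
      by linarith
    then show ?thesis
    proof cases
      case 1
      then have "tv < s u" using below_m(2)[OF that] sv_tv by linarith
      then show ?thesis by blast
    next
      case 2
      then show ?thesis using below_m(1) sv_tv by auto
    next
      case 3
      then have "t u < s d \<or> encloses s t u d"
        using disjoint_or_nested[OF that \<open>d \<in> X\<close>] interval[OF that] interval[OF \<open>d \<in> X\<close>]
        by (auto simp: encloses_def)
      then show ?thesis
        using below_m(1) sv_tv by (auto simp: encloses_def)
    qed
  qed
  moreover have "tv < t d"
    using sv_tv below_m(1) by linarith
  ultimately show thesis
    using that sv_tv(1,2) by blast
qed

lemma insert_below:
  assumes "symp E" "irreflp E" "finite X" "v \<notin> X" "d \<in> X"
    and neighbours: "\<And>u. u \<in> X \<Longrightarrow> E v u \<Longrightarrow> u = d \<or> encloses s t u d \<and> E u d"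
  shows "\<exists>sv tv. laminar_model (insert v X) E (s(v := sv)) (t(v := tv))"
proof -
  obtain sv tv where sv_tv: "s d < sv" "sv < tv" "tv < t d"
    and placed: "\<And>u. u \<in> X \<Longrightarrow>
      tv < s u \<or> t u < sv \<or> ((u = d \<or> encloses s t u d) \<and> s u < sv \<and> tv < t u)"
    using leaf_interval_below[OF \<open>finite X\<close> \<open>d \<in> X\<close>] by blast
  have "laminar_model (insert v X) E (s(v := sv)) (t(v := tv))"
  proof (rule insert_vertex)
    fix u assume "u \<in> X"
    then show "tv < s u \<or> t u < sv \<or> s u < sv \<and> tv < t u"
      using placed by blast
  next
    fix u assume "u \<in> X" "E v u"
    then have "u = d \<or> encloses s t u d"
      using neighbours by blast
    then show "s u < sv \<and> tv < t u"
      using sv_tv by (auto simp: encloses_def)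
  next
    fix a u assume "a \<in> X" "u \<in> X" "E v a" "encloses s t a u" "s u < sv" "tv < t u"
    then have "u = d \<or> encloses s t u d"
      using placed[OF \<open>u \<in> X\<close>] sv_tv by auto
    moreover have "E a d"
    proof -
      have "a \<noteq> d"
        using \<open>encloses s t a u\<close> \<open>u = d \<or> encloses s t u d\<close> by (auto simp: encloses_def)
      then show ?thesis
        using neighbours \<open>a \<in> X\<close> \<open>E v a\<close> by blast
    qed
    ultimately show "E a u"
      using edge_intermediate \<open>a \<in> X\<close> \<open>u \<in> X\<close> \<open>d \<in> X\<close> \<open>encloses s t a u\<close> by blast
  qed (use assms sv_tv in auto)
  then show ?thesis by blast
qed

lemma insert_simplicial:
  assumes "symp E" "irreflp E" "finite X" "v \<notin> X" "simplicial (insert v X) E v"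
  shows "\<exists>sv tv. laminar_model (insert v X) E (s(v := sv)) (t(v := tv))"
proof (cases "\<exists>u\<in>X. E v u")
  case False
  then show ?thesis
    using insert_isolated assms by blast
next
  case True
  define K where "K = {u \<in> X. E v u}"
  have "finite K" "K \<noteq> {}"
    using \<open>finite X\<close> True by (auto simp: K_def)
  then obtain d where "d \<in> K" "s d = Max (s ` K)"
    by (metis (mono_tags, lifting) Max_in finite_imageI image_iff image_is_empty)
  then have d_max: "s u \<le> s d" if "u \<in> K" for u
    using that \<open>finite K\<close> by simp
  have "u = d \<or> encloses s t u d \<and> E u d" if "u \<in> X" "E v u" for u
  proof (cases "u = d")
    case False
    then have "E u d"
      using that \<open>d \<in> K\<close> assms(5) by (auto simp: K_def simplicial_def is_clique_def)
    then show ?thesis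
      using edge_nested[of u d] d_max[of u] that \<open>d \<in> K\<close> by (auto simp: K_def encloses_def)
  qed simp
  then show ?thesis
    using insert_below assms \<open>d \<in> K\<close> by (auto simp: K_def)
qed

end

lemma chordal_laminar_model:
  assumes "finite X" "chordal X E" "symp E" "irreflp E"
  obtains s t where "laminar_model X E s t"
proof -
  have "\<exists>s t. laminar_model X E s t"
    using assms
  proof (induction rule: chordal_simplicial_induct)
    case empty
    have "laminar_model {} E s t" for s t
      by (rule laminar_model.intro) auto
    then show ?case by blast
  next
    case (insert Y v)
    then obtain s t where "laminar_model Y E s t"
      by blast
    moreover have "finite Y"
      using insert.hyps(1) assms(1) by (auto intro: finite_subset)
    ultimately show ?case
      using laminar_model.insert_simplicial[of Y E s t v] insert.hyps(2,3) assms(3,4) by blast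
  qed
  with that show thesis by blast
qed

section \<open>Boxes from a coloured laminar model\<close>

locale coloured_laminar_model = laminar_model +
  fixes k :: nat and c :: "'a \<Rightarrow> nat"
  assumes finite: "finite X" and sym: "symp E"
    and colour_less: "u \<in> X \<Longrightarrow> c u < k"
    and colour_proper: "u \<in> X \<Longrightarrow> w \<in> X \<Longrightarrow> E u w \<Longrightarrow> c u \<noteq> c w"
begin

text \<open>The enclosing neighbours of v are pairwise adjacent and hence differently coloured, so the
  minimum is over at most two values. No vertex has colour k, so coordinate k of the box of v
  is [s v, t v].\<close>

definition box_lo :: "'a \<Rightarrow> nat \<Rightarrow> real" where
  "box_lo v i = Min (s ` insert v {a \<in> X. E a v \<and> encloses s t a v \<and> c a = i})"

definition box_hi :: "'a \<Rightarrow> nat \<Rightarrow> real" where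
  "box_hi v i = (if c v = i then s v else t v)"

lemma box_lo_le: "box_lo v i \<le> s v"
  unfolding box_lo_def using finite by (intro Min_le) auto

lemma box_lo_le_enclosing_neighbour:
  "a \<in> X \<Longrightarrow> E a v \<Longrightarrow> encloses s t a v \<Longrightarrow> box_lo v (c a) \<le> s a"
  unfolding box_lo_def using finite by (intro Min_le) auto

lemma box_lo_unused_colour: "box_lo v k = s v"
proof -
  have "{a \<in> X. E a v \<and> encloses s t a v \<and> c a = k} = {}"
    using colour_less by fastforce
  then show ?thesis
    unfolding box_lo_def by (metis Min_singleton image_empty image_insert)
qed

lemma s_less_box_lo:
  assumes "x \<in> X" "y \<in> X" "encloses s t x y" "\<not> E x y"
  shows "s x < box_lo y (c x)"
proof -
  have "s x < s a" if "a \<in> X" "E a y" "encloses s t a y" "c a = c x" for a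
  proof -
    have "a \<noteq> x"
      using that(2) assms(4) by blast
    moreover have "\<not> encloses s t a x"
      using edge_intermediate[OF that(1) assms(1,2) that(2) _ assms(3)] colour_proper[OF that(1) assms(1)]
        that(4) by blast
    ultimately have "encloses s t x a"
      using disjoint_or_nested[OF that(1) assms(1)] that(3) assms(3) interval[OF assms(2)]
      by (auto simp: encloses_def)
    then show ?thesis by (simp add: encloses_def)
  qed
  then show ?thesis
    unfolding box_lo_def using finite assms(3) by (subst Min_gr_iff) (auto simp: encloses_def)
qed

lemma boxes_overlap_if_adjacent:
  assumes "x \<in> X" "y \<in> X" "encloses s t x y" "E x y"
  shows "box_lo x i \<le> box_hi y i \<and> box_lo y i \<le> box_hi x i"
proof -
  have "s x < s y" "t y < t x" "s y < t y"
    using assms(3) interval[OF assms(2)] by (auto simp: encloses_def)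
  moreover have "box_lo y i \<le> s x" if "c x = i"
    using box_lo_le_enclosing_neighbour[OF assms(1,4,3)] that by simp
  ultimately show ?thesis
    using box_lo_le[of x i] box_lo_le[of y i] colour_proper[OF assms(1,2,4)]
    by (auto simp: box_hi_def)
qed

lemma box_rep: "box_rep X E (Suc k) box_lo box_hi"
proof -
  have lo_le_hi: "box_lo v i \<le> box_hi v i" if "v \<in> X" for v i
    using box_lo_le[of v i] interval[OF that] by (simp add: box_hi_def)
  have overlap: "{box_lo x i..box_hi x i} \<inter> {box_lo y i..box_hi y i} \<noteq> {} \<longleftrightarrow>
      box_lo x i \<le> box_hi y i \<and> box_lo y i \<le> box_hi x i" if "x \<in> X" "y \<in> X" for x y i
    using lo_le_hi[OF that(1), of i] lo_le_hi[OF that(2), of i] by auto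
  have "E x y \<longleftrightarrow> (\<forall>i<Suc k. box_lo x i \<le> box_hi y i \<and> box_lo y i \<le> box_hi x i)"
    if xy: "x \<in> X" "y \<in> X" "x \<noteq> y" for x y
  proof
    assume "E x y"
    then show "\<forall>i<Suc k. box_lo x i \<le> box_hi y i \<and> box_lo y i \<le> box_hi x i"
      using edge_nested[OF that(1,2)] boxes_overlap_if_adjacent that sympD[OF sym, of x y] by blast
  next
    assume all: "\<forall>i<Suc k. box_lo x i \<le> box_hi y i \<and> box_lo y i \<le> box_hi x i"
    show "E x y"
    proof (rule ccontr)
      assume "\<not> E x y"
      then have "\<not> E y x"
        using sympD[OF sym] by blast
      consider "encloses s t x y" | "encloses s t y x" | "t x < s y \<or> t y < s x"
        using disjoint_or_nested[OF xy] by blast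
      then show False
      proof cases
        case 1
        then show False
          using s_less_box_lo[OF xy(1,2) 1 \<open>\<not> E x y\<close>] all[rule_format, of "c x"] colour_less[OF xy(1)]
          by (auto simp: box_hi_def)
      next
        case 2
        then show False
          using s_less_box_lo[OF xy(2,1) 2 \<open>\<not> E y x\<close>] all[rule_format, of "c y"] colour_less[OF xy(2)]
          by (auto simp: box_hi_def)
      next
        case 3
        then show False
          using all[rule_format, of k] box_lo_unused_colour colour_less[OF xy(1)] colour_less[OF xy(2)] by (auto simp: box_hi_def)
      qed
    qed
  qed
  then show ?thesis
    unfolding box_rep_def using lo_le_hi overlap by auto
qed

end

lemma boxicity_le: "box_rep V E b lo hi \<Longrightarrow> boxicity V E \<le> b"
  unfolding boxicity_def by (blast intro: Least_le)

lemma finite_clique_sizes: "finite V \<Longrightarrow> finite {card C | C. is_clique V E C}"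
  by (rule finite_subset[of _ "card ` Pow V"]) (auto simp: is_clique_def)

lemma card_le_clique_number: "finite V \<Longrightarrow> is_clique V E C \<Longrightarrow> card C \<le> clique_number V E"
  unfolding clique_number_def using finite_clique_sizes by (intro Max_ge) auto

lemma clique_number_le_max_degree:
  assumes "finite V"
  shows "clique_number V E \<le> max_degree V E + 1"
proof -
  have "is_clique V E {}"
    by (simp add: is_clique_def)
  then have "clique_number V E \<in> {card C | C. is_clique V E C}"
    unfolding clique_number_def using finite_clique_sizes[OF assms] by (intro Max_in) auto
  then obtain C where C: "is_clique V E C" "card C = clique_number V E"
    by auto
  show ?thesis
  proof (cases "C = {}")
    case False
    then obtain v where "v \<in> C" by blast
    have "C \<subseteq> V" "finite C"
      using C(1) assms by (auto simp: is_clique_def intro: finite_subset)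
    have "card C - 1 = card (C - {v})"
      using \<open>v \<in> C\<close> \<open>finite C\<close> by simp
    also have "\<dots> \<le> degree V E v"
      unfolding degree_def using C(1) \<open>v \<in> C\<close> assms
      by (intro card_mono) (auto simp: is_clique_def)
    also have "\<dots> \<le> max_degree V E"
      unfolding max_degree_def using assms \<open>v \<in> C\<close> \<open>C \<subseteq> V\<close> by (intro Max_ge) auto
    finally show ?thesis
      using C(2) by linarith
  qed (use C in simp)
qed

theorem theorem5:
  fixes V :: "'a set" and E :: "'a \<Rightarrow> 'a \<Rightarrow> bool"
  assumes "simple_graph V E" and "chordal V E"
  shows "boxicity V E \<le> clique_number V E + 1
       \<and> clique_number V E + 1 \<le> max_degree V E + 2"
proof -
  have "finite V" "symp E" "irreflp E"
    using assms(1) by (auto simp: simple_graph_def intro: sympI irreflpI)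
  obtain s t where "laminar_model V E s t"
    using chordal_laminar_model[OF \<open>finite V\<close> assms(2) \<open>symp E\<close> \<open>irreflp E\<close>] .
  obtain c where "\<And>u. u \<in> V \<Longrightarrow> c u < clique_number V E"
    "\<And>u w. u \<in> V \<Longrightarrow> w \<in> V \<Longrightarrow> E u w \<Longrightarrow> c u \<noteq> c w"
    using chordal_colouring[OF \<open>finite V\<close> assms(2) \<open>symp E\<close> \<open>irreflp E\<close>
        card_le_clique_number[OF \<open>finite V\<close>]] by blast
  with \<open>laminar_model V E s t\<close> \<open>finite V\<close> \<open>symp E\<close>
  interpret coloured_laminar_model V E s t "clique_number V E" c
    by (simp add: coloured_laminar_model_def coloured_laminar_model_axioms_def)
  have "boxicity V E \<le> clique_number V E + 1"
    using boxicity_le[OF box_rep] by simp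
  then show ?thesis
    using clique_number_le_max_degree[OF \<open>finite V\<close>] by simp
qed

end
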